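(* For every integer $n\ge 2$ and every real number $p\in(0,1)$, \[ (n-2)\bigl(n^p-(n-1)^p\bigr)^{1/(1-p)}+1\le (n-1)^{p/(1-p)}. \] *)

theory Defs
  imports Complex_Main
begin

end

theory Submission
  imports Defs "HOL-Analysis.Analysis"
begin

(* Put m = n - 1. By concavity, n^p - m^p <= p m^(p-1), and raising this to the power 1/(1-p)
   gives at most p^(1/(1-p)) / m <= p / m. The left-hand side is therefore at most
   1 + p (1 - 1/m) <= 1 + (p/(1-p)) ln m <= m^(p/(1-p)), using ln m >= 1 - 1/m and exp y >= 1 + y. *)

lemma powr_add_diff_le_tangent:
  fixes x h p :: real
  assumes "0 < x" and "0 \<le> h" and "0 \<le> p" and "p \<le> 1"
  shows "(x + h) powr p - x powr p \<le> p * h * x powr (p - 1)"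
proof -
  have young: "(x + h) powr p * x powr (1 - p) \<le> x + p * h"
    using Youngs_inequality_0[of p "1 - p" "x + h" x] assms by (simp add: algebra_simps)
  have "(x + h) powr p = ((x + h) powr p * x powr (1 - p)) * x powr (p - 1)"
    using assms(1) by (simp add: mult.assoc powr_add[symmetric])
  also have "\<dots> \<le> (x + p * h) * x powr (p - 1)"
    using young by (intro mult_right_mono) auto
  also have "\<dots> = x powr p + p * h * x powr (p - 1)"
    using assms(1) by (simp add: algebra_simps powr_mult_base)
  finally show ?thesis by simp
qed

lemma powr_ge_one_plus_mult_one_minus_inverse:
  fixes x q :: real
  assumes "0 < x" and "0 \<le> q"
  shows "1 + q * (1 - 1 / x) \<le> x powr q"
proof -
  have "1 - 1 / x \<le> ln x"
    using ln_le_minus_one[of "1 / x"] assms(1) by (simp add: ln_div)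
  then have "1 + q * (1 - 1 / x) \<le> 1 + q * ln x"
    using assms(2) by (simp add: mult_left_mono)
  also have "\<dots> \<le> exp (q * ln x)"
    by (rule exp_ge_add_one_self)
  also have "\<dots> = x powr q"
    using assms(1) by (simp add: powr_def)
  finally show ?thesis .
qed

lemma powr_succ_diff_powr_conjugate_le:
  fixes m p :: real
  assumes "0 < m" and "0 < p" and "p < 1"
  shows "((m + 1) powr p - m powr p) powr (1 / (1 - p)) \<le> p / m"
proof -
  define t where "t = 1 / (1 - p)"
  have "t \<ge> 1"
    using assms unfolding t_def by simp
  have "0 \<le> (m + 1) powr p - m powr p"
    using assms by (simp add: powr_mono2)
  moreover have "(m + 1) powr p - m powr p \<le> p * m powr (p - 1)"
    using powr_add_diff_le_tangent[of m 1 p] assms by simp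
  ultimately have "((m + 1) powr p - m powr p) powr t \<le> (p * m powr (p - 1)) powr t"
    using \<open>t \<ge> 1\<close> by (intro powr_mono2) auto
  also have "\<dots> = p powr t * m powr ((p - 1) * t)"
    using assms by (simp add: powr_mult powr_powr)
  also have "(p - 1) * t = -1"
    using assms unfolding t_def by (simp add: field_simps)
  also have "p powr t * m powr -1 = p powr t / m"
    using assms(1) by (simp add: powr_minus divide_inverse)
  also have "\<dots> \<le> p / m"
    using powr_mono'[of 1 t p] \<open>t \<ge> 1\<close> assms by (simp add: divide_right_mono)
  finally show ?thesis
    unfolding t_def .
qed

theorem lemma5:
  fixes n :: nat and p :: real
  assumes "n \<ge> 2" and "0 < p" and "p < 1"
  shows "(real n - 2) * (real n powr p - (real n - 1) powr p) powr (1 / (1 - p)) + 1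
           \<le> (real n - 1) powr (p / (1 - p))"
proof -
  define m where "m = real n - 1"
  have "m \<ge> 1" and n_eq: "real n = m + 1" and "real n - 2 = m - 1"
    using assms(1) unfolding m_def by auto
  have "(m - 1) * ((m + 1) powr p - m powr p) powr (1 / (1 - p)) + 1 \<le> (m - 1) * (p / m) + 1"
    using mult_left_mono[OF powr_succ_diff_powr_conjugate_le[of m p], of "m - 1"] assms \<open>m \<ge> 1\<close>
    by simp
  also have "\<dots> = 1 + p * (1 - 1 / m)"
    using \<open>m \<ge> 1\<close> by (simp add: field_simps)
  also have "\<dots> \<le> 1 + p / (1 - p) * (1 - 1 / m)"
    using assms \<open>m \<ge> 1\<close> by (intro add_left_mono mult_right_mono) (auto simp: field_simps)
  also have "\<dots> \<le> m powr (p / (1 - p))"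
    using assms \<open>m \<ge> 1\<close> by (intro powr_ge_one_plus_mult_one_minus_inverse) auto
  finally show ?thesis
    unfolding n_eq \<open>real n - 2 = m - 1\<close> m_def[symmetric] by simp
qed

end
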